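(* Let $p$ be an odd prime, $n,k$ positive integers, $d=\frac{p^k+1}{2}$ and $F(x)=x^d$ on $\mathrm{GF}(p^n)$. Then $F$ is perfect $c$-nonlinear for $c=-1$ if and only if $\frac{k}{\gcd(k,n)}$ is even.
   Context: For a function $F:\mathrm{GF}(p^n)\to\mathrm{GF}(p^n)$ and $a,b,c\in\mathrm{GF}(p^n)$, let ${}_c\Delta_F(a,b)=\#\{x\in\mathrm{GF}(p^n): F(x+a)-cF(x)=b\}$. The $c$-differential uniformity of $F$ is ${}_c\Delta_F=\max\{{}_c\Delta_F(a,b): a,b\in\mathrm{GF}(p^n),\ \text{and } a\neq 0 \text{ if } c=1\}$. $F$ is perfect $c$-nonlinear (P$c$N) if ${}_c\Delta_F=1$. *)

theory Defs
  imports Main "HOL-Computational_Algebra.Primes"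
begin

definition c_diff_count :: "('a::field \<Rightarrow> 'a) \<Rightarrow> 'a \<Rightarrow> 'a \<Rightarrow> 'a \<Rightarrow> nat" where
  "c_diff_count F c a b = card {x. F (x + a) - c * F x = b}"

definition c_diff_uniformity :: "('a::{field,finite} \<Rightarrow> 'a) \<Rightarrow> 'a \<Rightarrow> nat" where
  "c_diff_uniformity F c =
     Max {c_diff_count F c a b | a b. a \<noteq> 0 \<or> c \<noteq> 1}"

definition perfect_c_nonlinear :: "('a::{field,finite} \<Rightarrow> 'a) \<Rightarrow> 'a \<Rightarrow> bool" where
  "perfect_c_nonlinear F c \<longleftrightarrow> c_diff_uniformity F c = 1"

end

(*
  Put q = p^n and d = (p^k + 1) / 2. Let u and v be square roots of x + a and x in the
  algebraic closure. By the Frobenius, z |-> z^(p^k + 1) obeys the parallelogram law, so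
  2 ((x + a)^d + x^d) = (u + v)^(p^k + 1) + (u - v)^(p^k + 1), and the two summands have product
  a^(p^k + 1). Thus b = (x + a)^d + x^d determines (u + v)^(p^k + 1) = ((u + v)^2)^d up to
  replacing v by -v. Now (u + v)^2 lies in GF(q^2), and if k / gcd(k, n) is even then d is
  coprime to q^2 - 1, so (u + v)^2 is determined; then u + v is determined up to sign, hence
  u = ((u + v) + a / (u + v)) / 2 up to sign, hence x.
  If k / gcd(k, n) is odd, E = (p^gcd(k, n) + 1) / 2 divides d and q - 1 or q + 1, and an E-th
  root of unity (in GF(q), respectively of norm one in GF(q^2)) produces two solutions of the
  same equation; when d is even, already 0 and -1 collide.
*)

theory Submission
  imports Defs "HOL-Algebra.Algebraic_Closure_Type" "HOL-Number_Theory.Residues"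
begin

hide_const (open) Divisibility.prime

lemma power_eq_imp_eq_if_coprime_exponents:
  fixes x y :: "'b::idom"
  assumes "coprime d e" and "x ^ d = y ^ d" and "x ^ e = y ^ e" and "x \<noteq> 0"
  shows "x = y"
proof (cases "d = 0")
  case True
  with assms show ?thesis by simp
next
  case False
  then obtain s t where st: "d * s = e * t + 1"
    using bezout_nat[of d e] \<open>coprime d e\<close> by auto
  have "x ^ (e * t) * x = x ^ (d * s)" by (simp add: st power_add)
  also have "\<dots> = y ^ (d * s)" by (simp add: power_mult assms(2))
  also have "\<dots> = y ^ (e * t) * y" by (simp add: st power_add)
  also have "y ^ (e * t) = x ^ (e * t)" by (simp add: power_mult assms(3))
  finally show ?thesis using \<open>x \<noteq> 0\<close> by simp
qed

lemma power_eq_imp_eq_if_fixed: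
  fixes x y :: "'b::idom"
  assumes "coprime d (Q - 1)" and "d > 0" and "Q > 0"
    and "x ^ Q = x" and "y ^ Q = y" and "x ^ d = y ^ d"
  shows "x = y"
proof (cases "x = 0")
  case True
  with assms(2,6) show ?thesis by (simp add: power_0_left)
next
  case False
  with assms(2,6) have "y \<noteq> 0" by (auto simp: power_0_left)
  have unit: "z ^ (Q - 1) = 1" if "z ^ Q = z" "z \<noteq> 0" for z :: 'b
    using that \<open>Q > 0\<close> by (metis Suc_diff_1 mult_cancel_right1 power_Suc2)
  show ?thesis
    using power_eq_imp_eq_if_coprime_exponents[OF assms(1,6)] unit assms(4,5) False \<open>y \<noteq> 0\<close>
    by simp
qed

lemma eq_or_eq_if_sum_eq_and_prod_eq:
  fixes a b c e :: "'b::idom"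
  assumes "a + b = c + e" and "a * b = c * e"
  shows "a = c \<or> a = e"
proof -
  have "(a - c) * (a - e) = a * a - a * (c + e) + c * e" by (simp add: algebra_simps)
  also have "\<dots> = 0" by (simp flip: assms add: algebra_simps)
  finally show ?thesis by simp
qed

lemma diff_squares_imp_double_eq:
  fixes u v c :: "'b::field"
  assumes "u\<^sup>2 - v\<^sup>2 = c" and "c \<noteq> 0"
  shows "2 * u = (u + v) + c / (u + v)"
proof -
  have prod: "(u + v) * (u - v) = c" using assms(1) by (simp add: power2_eq_square algebra_simps)
  hence "u + v \<noteq> 0" using assms(2) by auto
  hence "u - v = c / (u + v)" using prod by (simp add: eq_divide_eq mult.commute)
  thus "2 * u = (u + v) + c / (u + v)" by (simp add: algebra_simps flip: \<open>u - v = c / (u + v)\<close>)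
qed

lemma power_frobenius_plus_one_add_diff:
  fixes a b :: "'b::comm_ring_1"
  assumes "prime CHAR('b)" and "odd CHAR('b)" and "P = CHAR('b) ^ k"
  shows "(a + b) ^ (P + 1) + (a - b) ^ (P + 1) = 2 * (a ^ (P + 1) + b ^ (P + 1))"
proof -
  have "odd P" using assms(2,3) by simp
  have "(a + b) ^ P = a ^ P + b ^ P" by (rule freshmans_dream'[OF assms(1,3)])
  moreover have "(a + (- b)) ^ P = a ^ P + (- b) ^ P" by (rule freshmans_dream'[OF assms(1,3)])
  ultimately have "(a + b) ^ (P + 1) = (a + b) * (a ^ P + b ^ P)"
    and "(a - b) ^ (P + 1) = (a - b) * (a ^ P - b ^ P)"
    using \<open>odd P\<close> by simp_all
  thus ?thesis by (simp add: algebra_simps)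
qed

section \<open>Arithmetic of \<open>p ^ k + 1\<close>\<close>

lemma cong_power_minus_one_imp_dvd_two:
  fixes m s :: int and p k n :: nat
  assumes "[int p ^ k = -1] (mod m)" and "[int p ^ n = s] (mod m)" and "s = 1 \<or> s = -1"
    and "k > 0" and "even (k div gcd k n)"
  shows "m dvd 2"
proof -
  define g where "g = gcd k n"
  obtain x y where xy: "k * x = n * y + g"
    using bezout_nat[of k n] \<open>k > 0\<close> g_def by auto
  define w where "w = s ^ y * (-1) ^ x"
  have "w * w = 1" "s ^ y * s ^ y = 1"
    using \<open>s = 1 \<or> s = -1\<close>
    by (auto simp: w_def algebra_simps simp flip: power_add power_mult_distrib)
  have "[s ^ y * int p ^ g = int p ^ (n * y) * int p ^ g] (mod m)"
    using cong_pow[OF assms(2), of y] by (simp add: power_mult cong_scalar_right cong_sym)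
  also have "int p ^ (n * y) * int p ^ g = int p ^ (k * x)" by (simp add: xy power_add)
  also have "[\<dots> = (-1) ^ x] (mod m)" using cong_pow[OF assms(1), of x] by (simp add: power_mult)
  finally have "[s ^ y * (s ^ y * int p ^ g) = s ^ y * (-1) ^ x] (mod m)"
    by (simp add: cong_scalar_left mult.assoc)
  hence pg: "[int p ^ g = w] (mod m)"
    using \<open>s ^ y * s ^ y = 1\<close> by (simp add: w_def flip: mult.assoc)
  obtain j where j: "k div g = 2 * j" using assms(5) g_def by blast
  have "int p ^ k = (int p ^ g) ^ (k div g)" by (simp add: g_def flip: power_mult)
  also have "[\<dots> = w ^ (k div g)] (mod m)" by (rule cong_pow[OF pg])
  also have "w ^ (k div g) = 1" by (simp add: j power_mult power2_eq_square \<open>w * w = 1\<close>)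
  finally have "[-1 = (1::int)] (mod m)" using assms(1) by (metis cong_sym cong_trans)
  thus ?thesis by (simp add: cong_iff_dvd_diff)
qed

lemma odd_half_power_plus_one:
  fixes p k :: nat
  assumes "odd p" and "even k"
  shows "odd ((p ^ k + 1) div 2)"
proof -
  obtain m where "p = 2 * m + 1" using \<open>odd p\<close> oddE by blast
  hence "p\<^sup>2 = 4 * (m * m + m) + 1" by (simp add: power2_eq_square algebra_simps)
  hence "[p\<^sup>2 = 1] (mod 4)" by (simp add: cong_def)
  moreover obtain j where "k = 2 * j" using \<open>even k\<close> by blast
  ultimately have "[p ^ k = 1] (mod 4)" using cong_pow[of "p\<^sup>2" 1 4 j] by (simp add: power_mult)
  thus ?thesis by (simp add: cong_def) presburger
qed

lemma coprime_half_power_plus_one: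
  fixes p k n :: nat
  assumes "odd p" and "k > 0" and "even (k div gcd k n)"
  shows "coprime ((p ^ k + 1) div 2) (p ^ (2 * n) - 1)"
proof -
  define d where "d = (p ^ k + 1) div 2"
  have "k = gcd k n * (k div gcd k n)" by simp
  hence "even k" using \<open>even (k div gcd k n)\<close> by (metis even_mult_iff)
  hence "odd d" using odd_half_power_plus_one \<open>odd p\<close> d_def by blast
  have "p ^ k + 1 = 2 * d" using \<open>odd p\<close> d_def by simp
  have coprime_if_cong: "coprime d N" if "[int p ^ n = s] (mod int N)" and "s = 1 \<or> s = -1" for N s
  proof -
    define m where "m = gcd d N"
    have "m dvd p ^ k + 1" using \<open>p ^ k + 1 = 2 * d\<close> by (simp add: m_def)
    hence "[int p ^ k = -1] (mod int m)"
      using of_nat_dvd_iff[of m "p ^ k + 1"] by (simp add: cong_iff_dvd_diff add.commute)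
    moreover have "[int p ^ n = s] (mod int m)"
      using that(1) cong_dvd_modulus[of _ _ "int N" "int m"] by (simp add: m_def)
    ultimately have "int m dvd 2"
      using cong_power_minus_one_imp_dvd_two that(2) assms(2,3) by blast
    hence "m \<le> 2" using int_dvd_int_iff[of m 2] by (simp add: dvd_imp_le)
    moreover have "odd m" using \<open>odd d\<close> m_def by (meson dvd_trans gcd_dvd1)
    ultimately have "m = 1" by presburger
    thus ?thesis by (simp add: m_def coprime_iff_gcd_eq_1)
  qed
  have "1 \<le> p ^ n" using \<open>odd p\<close> by (simp add: Suc_leI odd_pos)
  hence "coprime d (p ^ n - 1)"
    by (intro coprime_if_cong[of 1]) (simp_all add: cong_iff_dvd_diff of_nat_diff)
  moreover have "coprime d (p ^ n + 1)"
    by (intro coprime_if_cong[of "-1"]) (simp_all add: cong_iff_dvd_diff add.commute)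
  moreover have "p ^ (2 * n) = p ^ n * p ^ n" by (simp add: mult.commute power_mult power2_eq_square)
  hence "p ^ (2 * n) - 1 = (p ^ n - 1) * (p ^ n + 1)"
    using \<open>1 \<le> p ^ n\<close> by (cases "p ^ n") (simp_all add: algebra_simps)
  ultimately show ?thesis by (simp only: d_def coprime_mult_right_iff)
qed

lemma half_power_gcd_plus_one_dvd:
  fixes p k n :: nat
  assumes "odd p" and "p > 1" and "k > 0" and "odd (k div gcd k n)"
  defines "E \<equiv> (p ^ gcd k n + 1) div 2"
  shows "E dvd (p ^ k + 1) div 2" and "E dvd p ^ n - 1 \<or> E dvd p ^ n + 1" and "E \<ge> 2"
proof -
  define g where "g = gcd k n"
  define t where "t = p ^ g"
  have "t + 1 = 2 * E" using \<open>odd p\<close> by (simp add: E_def t_def g_def)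
  have "g > 0" using \<open>k > 0\<close> by (simp add: g_def)
  hence "t \<ge> p" using \<open>p > 1\<close> by (simp add: t_def self_le_power)
  moreover have "p \<ge> 3" using \<open>odd p\<close> \<open>p > 1\<close> by presburger
  ultimately show "E \<ge> 2" using \<open>t + 1 = 2 * E\<close> by linarith
  have pow_cong: "[int t ^ j = (-1) ^ j] (mod int (t + 1))" for j
    by (rule cong_pow) (simp add: cong_iff_dvd_diff add.commute)
  have "int p ^ k = int t ^ (k div g)" by (simp add: t_def g_def flip: power_mult)
  hence "int (t + 1) dvd int (p ^ k + 1)"
    using pow_cong[of "k div g"] \<open>odd (k div gcd k n)\<close>
    by (simp add: g_def cong_iff_dvd_diff add.commute)
  then obtain c where "p ^ k + 1 = 2 * E * c"
    using \<open>t + 1 = 2 * E\<close> by (auto simp only: of_nat_dvd_iff)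
  thus "E dvd (p ^ k + 1) div 2" by simp
  have "1 \<le> p ^ n" using \<open>p > 1\<close> by simp
  have "int p ^ n = int t ^ (n div g)" by (simp add: t_def g_def flip: power_mult)
  hence "int (t + 1) dvd int (p ^ n - 1) \<or> int (t + 1) dvd int (p ^ n + 1)"
    using pow_cong[of "n div g"] \<open>1 \<le> p ^ n\<close>
    by (cases "even (n div g)") (simp_all add: cong_iff_dvd_diff of_nat_diff add.commute)
  hence "(t + 1) dvd p ^ n - 1 \<or> (t + 1) dvd p ^ n + 1" by (simp only: of_nat_dvd_iff)
  moreover have "E dvd t + 1" using \<open>t + 1 = 2 * E\<close> by simp
  ultimately show "E dvd p ^ n - 1 \<or> E dvd p ^ n + 1" by (meson dvd_trans)
qed

lemma c_diff_count_le_one: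
  fixes F :: "'a::{field,finite} \<Rightarrow> 'a"
  assumes "\<And>x y. F (x + a) - c * F x = F (y + a) - c * F y \<Longrightarrow> x = y"
  shows "c_diff_count F c a b \<le> 1"
  unfolding c_diff_count_def One_nat_def by (subst card_le_Suc0_iff_eq) (auto intro: assms)

lemma two_le_c_diff_count:
  fixes F :: "'a::{field,finite} \<Rightarrow> 'a"
  assumes "F (u + a) - c * F u = b" and "F (v + a) - c * F v = b" and "u \<noteq> v"
  shows "2 \<le> c_diff_count F c a b"
proof -
  have "card {u, v} \<le> card {x. F (x + a) - c * F x = b}"
    using assms(1,2) by (intro card_mono) auto
  thus ?thesis using \<open>u \<noteq> v\<close> by (simp add: c_diff_count_def)
qed

lemma perfect_c_nonlinear_iff:
  fixes F :: "'a::{field,finite} \<Rightarrow> 'a"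
  assumes "c \<noteq> 1"
  shows "perfect_c_nonlinear F c \<longleftrightarrow> (\<forall>a b. c_diff_count F c a b \<le> 1)"
proof -
  define S where "S = {c_diff_count F c a b | a b. a \<noteq> 0 \<or> c \<noteq> 1}"
  have S: "S = (\<lambda>(a, b). c_diff_count F c a b) ` UNIV"
    using \<open>c \<noteq> 1\<close> by (auto simp: S_def)
  have "finite S" by (simp add: S)
  have "0 < c_diff_count F c 0 (F 0 - c * F 0)"
    unfolding c_diff_count_def by (auto simp: card_gt_0_iff)
  hence "1 \<le> Max S"
    using \<open>finite S\<close> by (intro Max_ge_iff[THEN iffD2]) (auto simp: S Suc_le_eq)
  hence "perfect_c_nonlinear F c \<longleftrightarrow> Max S \<le> 1"
    by (auto simp: perfect_c_nonlinear_def c_diff_uniformity_def S_def)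
  also have "\<dots> \<longleftrightarrow> (\<forall>a b. c_diff_count F c a b \<le> 1)"
    using \<open>finite S\<close> by (auto simp: S)
  finally show ?thesis .
qed

section \<open>A finite field inside its algebraic closure\<close>

lemma power_card_UNIV_eq_self:
  fixes x :: "'a::{field,finite}"
  shows "x ^ card (UNIV :: 'a set) = x"
proof (cases "x = 0")
  case True
  thus ?thesis by (simp add: power_0_left)
next
  case False
  define R where "R = (ring_of_type_algebra :: 'a ring)"
  interpret R: field R unfolding R_def by rule
  have pow: "y [^]\<^bsub>R\<^esub> m = y ^ m" for y :: 'a and m :: nat
    by (induction m) (simp_all add: R_def ring_of_type_algebra_def)
  have "Units R = UNIV - {0}"
    using R.field_Units by (simp add: R_def ring_of_type_algebra_def)
  moreover have "x [^]\<^bsub>R\<^esub> card (Units R) = \<one>\<^bsub>R\<^esub>"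
    using False \<open>Units R = UNIV - {0}\<close> by (intro R.units_power_order_eq_one) auto
  moreover have "\<one>\<^bsub>R\<^esub> = 1" by (simp add: R_def ring_of_type_algebra_def)
  ultimately have "x ^ card (UNIV - {0 :: 'a}) = 1" by (simp only: pow)
  hence "x ^ (card (UNIV :: 'a set) - 1) * x = x" by (simp add: card_Diff_singleton)
  moreover have "card (UNIV :: 'a set) = Suc (card (UNIV :: 'a set) - 1)"
    using finite_UNIV_card_ge_0[where ?'a = 'a] by simp
  ultimately show ?thesis by (metis power_Suc2)
qed

lemma in_range_to_ac_iff_power_card:
  fixes z :: "'a::{field,finite} alg_closure"
  shows "z \<in> range to_ac \<longleftrightarrow> z ^ card (UNIV :: 'a set) = z"
proof
  assume "z \<in> range to_ac"
  thus "z ^ card (UNIV :: 'a set) = z" by (auto simp flip: to_ac_power simp: power_card_UNIV_eq_self)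
next
  assume z: "z ^ card (UNIV :: 'a set) = z"
  define q where "q = card (UNIV :: 'a set)"
  have "q \<ge> 2"
    using card_mono[of UNIV "{0, 1 :: 'a}"] by (simp add: q_def)
  define P where "P = (monom 1 q - [:0, 1:] :: 'a alg_closure poly)"
  have "degree P = q"
    using \<open>q \<ge> 2\<close> unfolding P_def diff_conv_add_uminus
    by (subst degree_add_eq_left) (auto simp: degree_monom_eq)
  hence "P \<noteq> 0" using \<open>q \<ge> 2\<close> by auto
  define Fix where "Fix = {x :: 'a alg_closure. x ^ q = x}"
  have roots: "{x. poly P x = 0} = Fix" by (auto simp: P_def Fix_def poly_monom)
  hence fin: "finite Fix" using poly_roots_finite[OF \<open>P \<noteq> 0\<close>] by simp
  have "range to_ac \<subseteq> Fix"
    by (auto simp: Fix_def q_def power_card_UNIV_eq_self simp flip: to_ac_power)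
  moreover have "card Fix \<le> card (range (to_ac :: 'a \<Rightarrow> 'a alg_closure))"
    using card_poly_roots_bound[OF \<open>P \<noteq> 0\<close>] roots \<open>degree P = q\<close>
    by (simp add: card_image inj_to_ac q_def)
  ultimately have "range to_ac = Fix"
    using fin card_mono[OF fin] by (intro card_subset_eq) (auto intro: le_antisym)
  thus "z \<in> range to_ac" using z by (simp add: Fix_def q_def)
qed

lemma alg_closure_nontrivial_root_of_unity:
  assumes "E \<ge> 2" and "\<not> CHAR('b) dvd E"
  obtains w :: "'b::field alg_closure" where "w ^ E = 1" and "w \<noteq> 1"
proof -
  obtain x :: "'b alg_closure" where x: "(\<Sum>i\<le>E - 1. 1 * x ^ i) = 0"
    using alg_closed[of "E - 1" "\<lambda>_. 1"] assms(1) by auto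
  have "{..E - 1} = {..<E}" using assms(1) by auto
  hence geom: "(\<Sum>i<E. x ^ i) = 0" using x by simp
  hence "x ^ E = 1" using one_diff_power_eq[of x E] by simp
  moreover have "x \<noteq> 1"
  proof
    assume "x = 1"
    hence "of_nat E = (0 :: 'b alg_closure)" using geom by simp
    thus False using assms(2) by (simp add: of_nat_eq_0_iff_char_dvd)
  qed
  ultimately show thesis by (rule that)
qed

locale odd_finite_field =
  fixes p n :: nat and field_type :: "'a::{field,finite} itself"
  assumes prime_p: "prime p" and odd_p: "odd p" and card_UNIV: "card (UNIV :: 'a set) = p ^ n"
begin

abbreviation q :: nat where "q \<equiv> p ^ n"

lemma CHAR_eq [simp]: "CHAR('a) = p"
proof -
  have "prime CHAR('a)" by (simp add: finite_imp_CHAR_pos prime_CHAR_semidom)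
  moreover have "CHAR('a) dvd p ^ n" using CHAR_dvd_CARD[where 'a = 'a] card_UNIV by simp
  ultimately have "CHAR('a) dvd p" using prime_dvd_power by blast
  with \<open>prime CHAR('a)\<close> show ?thesis using prime_p primes_dvd_imp_eq by blast
qed

lemma two_neq_zero [simp]: "(2 :: 'a) \<noteq> 0"
proof
  assume "(2 :: 'a) = 0"
  hence "p dvd 2" using of_nat_eq_0_iff_char_dvd[of 2, where 'a = 'a] by simp
  thus False using prime_ge_2_nat[OF prime_p] dvd_imp_le[of p 2] odd_p by auto
qed

lemma two_neq_zero_alg_closure [simp]: "(2 :: 'a alg_closure) \<noteq> 0"
  by (metis to_ac_numeral to_ac_eq_0_iff two_neq_zero)

lemma minus_one_neq_one: "(-1 :: 'a) \<noteq> 1"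
  using two_neq_zero by (metis one_add_one neg_eq_iff_add_eq_0)

lemma odd_q: "odd q" using odd_p by simp

lemma n_pos: "0 < n"
proof (rule ccontr)
  assume "\<not> 0 < n"
  hence "card (UNIV :: 'a set) = 1" using card_UNIV by simp
  hence "(0 :: 'a) = 1" by (metis card_1_singletonE UNIV_I singletonD)
  thus False by simp
qed

lemma power_q [simp]: "(x :: 'a) ^ q = x"
  using power_card_UNIV_eq_self[of x] card_UNIV by simp

lemma in_range_to_ac_iff: "z \<in> range to_ac \<longleftrightarrow> z ^ q = z" for z :: "'a alg_closure"
  using in_range_to_ac_iff_power_card[of z] card_UNIV by simp

lemma frobenius_alg_closure: "(x + y :: 'a alg_closure) ^ (p ^ j) = x ^ (p ^ j) + y ^ (p ^ j)"
  by (rule freshmans_dream') (simp_all add: prime_p)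

lemma power_q_square_eq_if_square_in_range:
  fixes z :: "'a alg_closure"
  assumes "z\<^sup>2 \<in> range to_ac"
  shows "z ^ q\<^sup>2 = z"
proof -
  have "(z ^ q)\<^sup>2 = (z\<^sup>2) ^ q" by (simp flip: power_mult add: mult.commute)
  also have "\<dots> = z\<^sup>2" using assms by (simp add: in_range_to_ac_iff)
  finally have "(z ^ q)\<^sup>2 = z\<^sup>2" .
  hence "z ^ q = z \<or> z ^ q = - z" by (simp add: power2_eq_iff)
  moreover have "z ^ q\<^sup>2 = (z ^ q) ^ q" by (simp add: power2_eq_square power_mult)
  ultimately show ?thesis using odd_q by auto
qed

lemma power_q_square_of_sum:
  fixes u v :: "'a alg_closure"
  assumes "u\<^sup>2 \<in> range to_ac" and "v\<^sup>2 \<in> range to_ac"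
  shows "(u + v) ^ q\<^sup>2 = u + v"
proof -
  have "q\<^sup>2 = p ^ (n * 2)" by (simp add: power_mult)
  thus ?thesis
    using frobenius_alg_closure[of u v "n * 2"] power_q_square_eq_if_square_in_range assms by simp
qed

lemma not_p_dvd_if_dvd_q_minus_or_plus_one:
  assumes "E dvd q - 1 \<or> E dvd q + 1"
  shows "\<not> p dvd E"
proof
  assume "p dvd E"
  have "p dvd q" using n_pos by (cases n) simp_all
  moreover have "1 \<le> q" using prime_gt_0_nat[OF prime_p] by simp
  moreover have "p dvd q - 1 \<or> p dvd q + 1" using assms \<open>p dvd E\<close> by (meson dvd_trans)
  ultimately have "p dvd 1" by (metis add_diff_cancel_left' diff_diff_cancel dvd_diff_nat)
  thus False using prime_p by simp
qed

lemma exists_nontrivial_root_of_unity: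
  assumes "E dvd q - 1" and "E \<ge> 2"
  obtains w :: 'a where "w ^ E = 1" and "w \<noteq> 1"
proof -
  have "\<not> CHAR('a) dvd E" using not_p_dvd_if_dvd_q_minus_or_plus_one assms(1) by simp
  then obtain \<omega> :: "'a alg_closure" where \<omega>: "\<omega> ^ E = 1" "\<omega> \<noteq> 1"
    using alg_closure_nontrivial_root_of_unity[OF assms(2)] by blast
  obtain j where "q - 1 = E * j" using assms(1) by blast
  hence "\<omega> ^ (q - 1) = 1" using \<omega>(1) by (simp add: power_mult)
  moreover have "q = Suc (q - 1)" using odd_q by (simp add: odd_pos)
  ultimately have "\<omega> ^ q = \<omega>" by (metis power_Suc mult_1_right)
  then obtain w where "\<omega> = to_ac w" using in_range_to_ac_iff by blast
  thus thesis using \<omega> that by (metis to_ac_1 to_ac_eq_iff to_ac_power)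
qed

end

section \<open>The power map \<open>x \<mapsto> x ^ ((p ^ k + 1) div 2)\<close>\<close>

locale odd_finite_field_power = odd_finite_field + fixes k :: nat
begin

abbreviation d :: nat where "d \<equiv> (p ^ k + 1) div 2"

lemma two_d: "2 * d = p ^ k + 1"
  using odd_p by simp

lemma d_pos: "0 < d"
  using two_d by linarith

lemma power_p_power_plus_one: "z ^ (p ^ k + 1) = (z\<^sup>2) ^ d" for z :: "'b::monoid_mult"
proof -
  have "z ^ (p ^ k + 1) = z ^ (2 * d)" by (simp only: two_d)
  thus ?thesis by (simp add: power_mult)
qed

lemma sum_power_d_of_squares:
  fixes u v :: "'a alg_closure"
  shows "2 * ((u\<^sup>2) ^ d + (v\<^sup>2) ^ d) = (u + v) ^ (p ^ k + 1) + (u - v) ^ (p ^ k + 1)"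
proof -
  have "(u + v) ^ (p ^ k + 1) + (u - v) ^ (p ^ k + 1) = 2 * (u ^ (p ^ k + 1) + v ^ (p ^ k + 1))"
    by (rule power_frobenius_plus_one_add_diff) (simp_all add: prime_p odd_p)
  thus ?thesis by (simp only: power_p_power_plus_one[of u] power_p_power_plus_one[of v])
qed

lemma eq_if_power_of_root_sums_eq:
  fixes u v u' v' :: "'a alg_closure"
  assumes "coprime d (q\<^sup>2 - 1)" and "a \<noteq> 0"
    and "u\<^sup>2 = to_ac (x + a)" and "v\<^sup>2 = to_ac x"
    and "u'\<^sup>2 = to_ac (y + a)" and "v'\<^sup>2 = to_ac y"
    and "(u + v) ^ (p ^ k + 1) = (u' + v') ^ (p ^ k + 1)"
  shows "x = y"
proof -
  have diff: "u\<^sup>2 - v\<^sup>2 = to_ac a" "u'\<^sup>2 - v'\<^sup>2 = to_ac a"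
    using assms(3-6) by simp_all
  have square_fixed: "(z\<^sup>2) ^ q\<^sup>2 = z\<^sup>2" if "z ^ q\<^sup>2 = z" for z :: "'a alg_closure"
    by (metis that power_mult mult.commute)
  have "u\<^sup>2 \<in> range to_ac" "v\<^sup>2 \<in> range to_ac"
    "u'\<^sup>2 \<in> range to_ac" "v'\<^sup>2 \<in> range to_ac"
    using assms(3-6) by (metis rangeI)+
  hence fixed: "((u + v)\<^sup>2) ^ q\<^sup>2 = (u + v)\<^sup>2"
    "((u' + v')\<^sup>2) ^ q\<^sup>2 = (u' + v')\<^sup>2"
    using power_q_square_of_sum square_fixed by blast+
  have "((u + v)\<^sup>2) ^ d = ((u' + v')\<^sup>2) ^ d" using assms(7) by (simp only: power_p_power_plus_one)
  hence "(u + v)\<^sup>2 = (u' + v')\<^sup>2"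
    using power_eq_imp_eq_if_fixed[OF assms(1) d_pos] fixed prime_gt_0_nat[OF prime_p] by simp
  hence sums: "u' + v' = u + v \<or> u' + v' = - (u + v)" by (metis power2_eq_iff)
  have double: "2 * u = (u + v) + to_ac a / (u + v)" "2 * u' = (u' + v') + to_ac a / (u' + v')"
    using diff_squares_imp_double_eq[OF diff(1)] diff_squares_imp_double_eq[OF diff(2)]
      \<open>a \<noteq> 0\<close> by simp_all
  from sums have "2 * u' = 2 * u \<or> 2 * u' = - (2 * u)"
  proof
    assume "u' + v' = u + v"
    thus ?thesis by (intro disjI1) (simp only: double)
  next
    assume "u' + v' = - (u + v)"
    thus ?thesis by (intro disjI2) (simp only: double divide_minus_right minus_add_distrib[symmetric])
  qed
  hence "u' = u \<or> u' = - u" by (metis mult_minus_right mult_left_cancel two_neq_zero_alg_closure)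
  hence "u'\<^sup>2 = u\<^sup>2" by auto
  thus "x = y" using assms(3,5) by simp
qed

lemma sum_power_d_inj:
  fixes x y a :: 'a
  assumes "coprime d (q\<^sup>2 - 1)" and "(x + a) ^ d + x ^ d = (y + a) ^ d + y ^ d"
  shows "x = y"
proof (cases "a = 0")
  case True
  have fixed: "z ^ q\<^sup>2 = z" for z :: 'a by (simp add: power2_eq_square power_mult)
  have "x ^ d = y ^ d" using assms(2) True by (simp flip: mult_2)
  with fixed[of x] fixed[of y] show ?thesis
    using power_eq_imp_eq_if_fixed[OF assms(1) d_pos] prime_gt_0_nat[OF prime_p] by simp
next
  case False
  obtain u v u' v' :: "'a alg_closure" where roots:
    "u\<^sup>2 = to_ac (x + a)" "v\<^sup>2 = to_ac x" "u'\<^sup>2 = to_ac (y + a)" "v'\<^sup>2 = to_ac y"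
    using nth_root_exists[of 2] by (metis zero_less_numeral)
  define D where "D = (u + v) ^ (p ^ k + 1)"
  define C where "C = (u - v) ^ (p ^ k + 1)"
  define D' where "D' = (u' + v') ^ (p ^ k + 1)"
  define C' where "C' = (u' - v') ^ (p ^ k + 1)"
  have "2 * (D + C) = 2 * (D' + C')"
    using arg_cong[OF assms(2), of "\<lambda>z. 2 * to_ac z"] sum_power_d_of_squares[of u v]
      sum_power_d_of_squares[of u' v'] roots
    by (simp add: D_def C_def D'_def C'_def)
  hence "D + C = D' + C'" by (metis mult_left_cancel two_neq_zero_alg_closure)
  moreover have "D * C = D' * C'"
  proof -
    have prod: "(z + w) ^ (p ^ k + 1) * (z - w) ^ (p ^ k + 1) = (z\<^sup>2 - w\<^sup>2) ^ (p ^ k + 1)"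
      for z w :: "'a alg_closure"
      by (simp only: power2_eq_square square_diff_square_factored flip: power_mult_distrib)
    show ?thesis using prod[of u v] prod[of u' v'] roots by (simp add: D_def C_def D'_def C'_def)
  qed
  ultimately have "D = D' \<or> D = C'" by (rule eq_or_eq_if_sum_eq_and_prod_eq)
  thus ?thesis
  proof
    assume "D = D'"
    thus ?thesis using eq_if_power_of_root_sums_eq[OF assms(1) False roots] by (simp add: D_def D'_def)
  next
    assume "D = C'"
    moreover have "(- v')\<^sup>2 = to_ac y" using roots(4) by simp
    ultimately show ?thesis
      using eq_if_power_of_root_sums_eq[OF assms(1) False roots(1-3), of "- v'"] by (simp add: D_def C'_def)
  qed
qed

lemma exists_nonzero_solution_if_conjugate_pair:
  fixes \<delta> \<gamma> \<omega> :: "'a alg_closure"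
  assumes "\<delta> ^ q = \<gamma>" and "\<gamma> ^ q = \<delta>" and "\<delta> \<noteq> \<gamma>"
    and "\<delta> = \<omega> * \<gamma>" and "\<omega> ^ d = 1"
  obtains a v :: 'a where "v \<noteq> 0" and "(v + a) ^ d + v ^ d = a ^ d"
proof -
  define s where "s = (\<delta> + \<gamma>) / 2"
  define t where "t = (\<delta> - \<gamma>) / 2"
  have "s + t = \<delta>" "s - t = \<gamma>" by (simp_all add: s_def t_def field_simps)
  have two_q: "(2 :: 'a alg_closure) ^ q = 2" by (metis to_ac_numeral to_ac_power power_q)
  have "s ^ q = s"
    using frobenius_alg_closure[of \<delta> \<gamma> n] assms(1,2)
    by (simp add: s_def power_divide two_q add.commute)
  have "t ^ q = - t"
    using frobenius_alg_closure[of \<delta> "- \<gamma>" n] assms(1,2) odd_q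
    by (simp add: t_def power_divide two_q)
  have square_power: "(z\<^sup>2) ^ q = (z ^ q)\<^sup>2" for z :: "'a alg_closure"
    by (metis power_mult mult.commute)
  have "(s\<^sup>2) ^ q = s\<^sup>2" "(t\<^sup>2) ^ q = t\<^sup>2"
    using \<open>s ^ q = s\<close> \<open>t ^ q = - t\<close> by (simp_all add: square_power)
  then obtain u0 v0 where u0: "s\<^sup>2 = to_ac u0" and v0: "t\<^sup>2 = to_ac v0"
    using in_range_to_ac_iff by (metis rangeE)
  define a where "a = u0 - v0"
  have "to_ac a = s\<^sup>2 - t\<^sup>2" using u0 v0 by (simp add: a_def)
  also have "\<dots> = (s + t) * (s - t)" by (simp add: power2_eq_square square_diff_square_factored)
  finally have "to_ac a = \<delta> * \<gamma>" using \<open>s + t = \<delta>\<close> \<open>s - t = \<gamma>\<close> by simp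
  have "\<omega> ^ (p ^ k + 1) = (\<omega> ^ d)\<^sup>2"
    by (simp only: power_p_power_plus_one) (metis power_mult mult.commute)
  hence "\<delta> ^ (p ^ k + 1) = \<gamma> ^ (p ^ k + 1)"
    using \<open>\<omega> ^ d = 1\<close> by (simp add: \<open>\<delta> = \<omega> * \<gamma>\<close> power_mult_distrib)
  hence "2 * ((s\<^sup>2) ^ d + (t\<^sup>2) ^ d) = 2 * \<gamma> ^ (p ^ k + 1)"
    using sum_power_d_of_squares[of s t] \<open>s + t = \<delta>\<close> \<open>s - t = \<gamma>\<close> by simp
  hence "(s\<^sup>2) ^ d + (t\<^sup>2) ^ d = (\<gamma>\<^sup>2) ^ d"
    by (metis mult_left_cancel two_neq_zero_alg_closure power_p_power_plus_one)
  also have "\<dots> = (\<omega> * \<gamma>\<^sup>2) ^ d" using \<open>\<omega> ^ d = 1\<close> by (simp add: power_mult_distrib)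
  also have "\<omega> * \<gamma>\<^sup>2 = \<delta> * \<gamma>"
    by (simp add: \<open>\<delta> = \<omega> * \<gamma>\<close> power2_eq_square mult.assoc)
  finally have "to_ac (u0 ^ d + v0 ^ d) = to_ac (a ^ d)"
    using u0 v0 \<open>to_ac a = \<delta> * \<gamma>\<close> by simp
  hence "u0 ^ d + v0 ^ d = a ^ d" by (simp only: to_ac_eq_iff)
  hence "(v0 + a) ^ d + v0 ^ d = a ^ d" by (simp add: a_def)
  moreover have "v0 \<noteq> 0" using v0 \<open>\<delta> \<noteq> \<gamma>\<close> by (auto simp: t_def)
  ultimately show thesis using that by blast
qed

lemma exists_nonzero_solution_of_sum_power_eq:
  assumes "E dvd d" and "E dvd q + 1" and "E \<ge> 2" and "odd d"
  obtains a v :: 'a where "v \<noteq> 0" and "(v + a) ^ d + v ^ d = a ^ d"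
proof -
  have "\<not> CHAR('a) dvd E" using not_p_dvd_if_dvd_q_minus_or_plus_one assms(2) by simp
  then obtain \<omega> :: "'a alg_closure" where \<omega>: "\<omega> ^ E = 1" "\<omega> \<noteq> 1"
    using alg_closure_nontrivial_root_of_unity[OF assms(3)] by blast
  have "odd E" using assms(1,4) by (meson dvd_trans)
  hence "\<omega> \<noteq> - 1"
    using \<omega>(1) two_neq_zero_alg_closure by (metis one_add_one neg_eq_iff_add_eq_0 power_minus_odd power_one)
  have "\<omega> ^ d = 1" using \<omega>(1) assms(1) by (metis dvd_def power_mult power_one)
  have "\<omega> ^ (q + 1) = 1" using \<omega>(1) assms(2) by (metis dvd_def power_mult power_one)
  define \<omega>' where "\<omega>' = \<omega> ^ q"
  have inverse: "\<omega> * \<omega>' = 1" using \<open>\<omega> ^ (q + 1) = 1\<close> by (simp add: \<omega>'_def mult.commute)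
  have "q * q = (q + 1) * (q - 1) + 1" using odd_q by (cases q) (simp_all add: algebra_simps)
  have "\<omega>' ^ q = \<omega> ^ (q * q)" by (simp add: \<omega>'_def power_mult)
  also have "\<dots> = (\<omega> ^ (q + 1)) ^ (q - 1) * \<omega>"
    by (simp only: \<open>q * q = (q + 1) * (q - 1) + 1\<close> power_add power_mult power_one_right)
  also have "\<dots> = \<omega>" using \<open>\<omega> ^ (q + 1) = 1\<close> by simp
  finally have "\<omega>' ^ q = \<omega>" .
  have "\<omega> \<noteq> \<omega>'"
  proof
    assume "\<omega> = \<omega>'"
    hence "\<omega>\<^sup>2 = 1" using inverse by (simp add: power2_eq_square)
    thus False using \<omega>(2) \<open>\<omega> \<noteq> - 1\<close> by (simp add: power2_eq_1_iff)
  qed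
  show thesis
  proof (rule exists_nonzero_solution_if_conjugate_pair)
    show "(1 + \<omega>) ^ q = 1 + \<omega>'" using frobenius_alg_closure[of 1 \<omega> n] by (simp add: \<omega>'_def)
    show "(1 + \<omega>') ^ q = 1 + \<omega>"
      using frobenius_alg_closure[of 1 \<omega>' n] \<open>\<omega>' ^ q = \<omega>\<close> by simp
    show "1 + \<omega> \<noteq> 1 + \<omega>'" using \<open>\<omega> \<noteq> \<omega>'\<close> by simp
    show "1 + \<omega> = \<omega> * (1 + \<omega>')" using inverse by (simp add: algebra_simps)
  qed (use that \<open>\<omega> ^ d = 1\<close> in auto)
qed

lemma c_diff_count_le_one_if_even:
  assumes "k > 0" and "even (k div gcd k n)"
  shows "c_diff_count (\<lambda>x::'a. x ^ d) (-1) a b \<le> 1"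
proof -
  have "coprime d (p ^ (2 * n) - 1)" using coprime_half_power_plus_one[OF odd_p assms] .
  moreover have "p ^ (2 * n) = q\<^sup>2" by (metis power_mult mult.commute)
  ultimately have "coprime d (q\<^sup>2 - 1)" by simp
  show ?thesis
    by (rule c_diff_count_le_one, rule sum_power_d_inj[OF \<open>coprime d (q\<^sup>2 - 1)\<close>]) simp
qed

lemma exists_c_diff_count_ge_two_if_odd:
  assumes "k > 0" and "odd (k div gcd k n)"
  shows "\<exists>a b. 2 \<le> c_diff_count (\<lambda>x::'a. x ^ d) (-1) a b"
proof (cases "even d")
  case True
  have "2 \<le> c_diff_count (\<lambda>x::'a. x ^ d) (-1) 1 1"
    by (rule two_le_c_diff_count[where u = 0 and v = "-1"]) (use True d_pos in simp_all)
  thus ?thesis by blast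
next
  case False
  define E where "E = (p ^ gcd k n + 1) div 2"
  note E = half_power_gcd_plus_one_dvd[OF odd_p prime_gt_1_nat[OF prime_p] assms, folded E_def]
  from E(2) show ?thesis
  proof
    assume "E dvd q - 1"
    then obtain w :: 'a where "w ^ E = 1" and "w \<noteq> 1"
      using exists_nontrivial_root_of_unity E(3) by blast
    hence "w ^ d = 1" using E(1) by (metis dvd_def power_mult power_one)
    have "2 \<le> c_diff_count (\<lambda>x::'a. x ^ d) (-1) 0 2"
      by (rule two_le_c_diff_count[where u = 1 and v = w])
        (use \<open>w ^ d = 1\<close> \<open>w \<noteq> 1\<close> in simp_all)
    thus ?thesis by blast
  next
    assume "E dvd q + 1"
    then obtain a v :: 'a where "v \<noteq> 0" and "(v + a) ^ d + v ^ d = a ^ d"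
      using exists_nonzero_solution_of_sum_power_eq E(1,3) False by blast
    have "2 \<le> c_diff_count (\<lambda>x::'a. x ^ d) (-1) a (a ^ d)"
      by (rule two_le_c_diff_count[where u = 0 and v = v])
        (use \<open>v \<noteq> 0\<close> \<open>(v + a) ^ d + v ^ d = a ^ d\<close> d_pos in simp_all)
    thus ?thesis by blast
  qed
qed

end

theorem theorem3:
  fixes p n k :: nat
  assumes "prime p" and "odd p" and "n > 0" and "k > 0"
    and "card (UNIV :: 'a::{field,finite} set) = p ^ n"
  shows "perfect_c_nonlinear (\<lambda>x::'a. x ^ ((p ^ k + 1) div 2)) (-1)
         \<longleftrightarrow> even (k div gcd k n)"
proof -
  interpret odd_finite_field_power p n "TYPE('a)" k
    using assms by unfold_locales
  have pcn_iff: "perfect_c_nonlinear (\<lambda>x::'a. x ^ d) (-1)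
      \<longleftrightarrow> (\<forall>a b. c_diff_count (\<lambda>x::'a. x ^ d) (-1) a b \<le> 1)"
    by (rule perfect_c_nonlinear_iff[OF minus_one_neq_one])
  show ?thesis
  proof (cases "even (k div gcd k n)")
    case True
    thus ?thesis using pcn_iff c_diff_count_le_one_if_even \<open>k > 0\<close> by simp
  next
    case False
    then obtain a b where "2 \<le> c_diff_count (\<lambda>x::'a. x ^ d) (-1) a b"
      using exists_c_diff_count_ge_two_if_odd \<open>k > 0\<close> by blast
    hence "\<not> c_diff_count (\<lambda>x::'a. x ^ d) (-1) a b \<le> 1" by simp
    thus ?thesis using pcn_iff False by blast
  qed
qed

end
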